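(* Consider a fair allocation instance with agents $a_1,\dots,a_n$, a set $M$ of $m$ goods, binary XOS valuations $v_i$ accessed through a value oracle answering $v_i(S)$ in $O(1)$ time, and entitlements $b_i>0$. Consider the following algorithm. Initialize $s_i=\lfloor b_i m\rfloor$ for all $i$. Repeat: sort the agents so that $\frac{\lceil s_1/2\rceil}{b_1}\le\cdots\le\frac{\lceil s_n/2\rceil}{b_n}$; set $R\gets M$; for $i=1,\dots,n$ in this order, if $v_i(R)\ge\lceil s_i/2\rceil$ then give $a_i$ a bundle $A_i\subseteq R$ with $v_i(A_i)=|A_i|=\lceil s_i/2\rceil$ (computed by extracting a non-wasteful subset, which can be done in $O(m)$ time) and set $R\gets R\setminus A_i$; otherwise set $s_i\gets s_i-1$ and start the next repetition. If all $n$ agents received bundles, allocate $R$ arbitrarily and return the allocation. This algorithm runs in time $O(mn(m+\log n))$.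
   Context: A valuation $v:2^M\to\mathbb{R}_{\ge0}$ is XOS if there is a finite collection of additive functions $\{\ell_t\}_t$ with nonnegative item values such that $v(S)=\max_t\ell_t(S)$. It has binary marginals if $v(\varnothing)=0$ and $v(S\cup\{g\})-v(S)\in\{0,1\}$ for all $S,g$; "binary XOS" means XOS with binary marginals. A set $S$ is non-wasteful for $v$ if $v(S)=|S|$. For a binary XOS $v$ and any set $T$, a non-wasteful subset $X\subseteq T$ with $|X|=k$ for any given $k\le v(T)$ can be computed in $O(m)$ time (this is taken as a primitive in the running-time accounting). *)

theory Defs
  imports Main "HOL.Transcendental"
begin

definition XOS :: "'g set \<Rightarrow> ('g set \<Rightarrow> real) \<Rightarrow> bool" where
  "XOS M v \<longleftrightarrow> (\<exists>L :: ('g \<Rightarrow> real) set. finite L \<and> L \<noteq> {} \<and>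
      (\<forall>l\<in>L. \<forall>g\<in>M. l g \<ge> 0) \<and>
      (\<forall>S. S \<subseteq> M \<longrightarrow> v S = Max ((\<lambda>l. \<Sum>g\<in>S. l g) ` L)))"

definition binary_marginals :: "'g set \<Rightarrow> ('g set \<Rightarrow> real) \<Rightarrow> bool" where
  "binary_marginals M v \<longleftrightarrow> v {} = 0 \<and>
      (\<forall>S g. S \<subseteq> M \<and> g \<in> M \<longrightarrow> v (insert g S) - v S \<in> {0, 1})"

definition binary_XOS :: "'g set \<Rightarrow> ('g set \<Rightarrow> real) \<Rightarrow> bool" where
  "binary_XOS M v \<longleftrightarrow> XOS M v \<and> binary_marginals M v"

definition half :: "int \<Rightarrow> int" where
  "half k = \<lceil>real_of_int k / 2\<rceil>"

definition sorted_order :: "nat \<Rightarrow> (nat \<Rightarrow> real) \<Rightarrow> (nat \<Rightarrow> int) \<Rightarrow> nat list \<Rightarrow> bool" where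
  "sorted_order n b s \<sigma> \<longleftrightarrow> distinct \<sigma> \<and> set \<sigma> = {..<n} \<and>
     sorted_wrt (\<lambda>i j. real_of_int (half (s i)) / b i \<le> real_of_int (half (s j)) / b j) \<sigma>"

definition sort_cost :: "nat \<Rightarrow> real" where
  "sort_cost n = real n * (ln (real n) + 1)"

datatype 'g round_outcome = All_Served "nat \<Rightarrow> 'g set" "'g set" | Failed nat

text \<open>Cost: 1 per oracle query; for a served agent additionally |M| for extracting a non-wasteful
  subset (the O(m) primitive) and |M| for updating R.\<close>
inductive round_exec :: "'g set \<Rightarrow> (nat \<Rightarrow> 'g set \<Rightarrow> real) \<Rightarrow> (nat \<Rightarrow> int) \<Rightarrow> nat list
    \<Rightarrow> 'g set \<Rightarrow> (nat \<Rightarrow> 'g set) \<Rightarrow> 'g round_outcome \<Rightarrow> real \<Rightarrow> bool"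
  for M v s where
  round_nil: "round_exec M v s [] R A (All_Served A R) 0"
| round_serve: "\<lbrakk> v i R \<ge> real_of_int (half (s i)); A' \<subseteq> R;
      v i A' = real (card A'); int (card A') = half (s i);
      round_exec M v s \<sigma> (R - A') (A(i := A')) out c \<rbrakk>
    \<Longrightarrow> round_exec M v s (i # \<sigma>) R A out (c + 1 + 2 * real (card M))"
| round_fail: "\<not> v i R \<ge> real_of_int (half (s i))
    \<Longrightarrow> round_exec M v s (i # \<sigma>) R A (Failed i) 1"

datatype 'g config = Running "nat \<Rightarrow> int" | Done "nat \<Rightarrow> 'g set"

text \<open>One repetition of the outer loop, with its cost. After success, R is allocated
  arbitrarily (cost |M|).\<close>
inductive alg_step :: "'g set \<Rightarrow> (nat \<Rightarrow> 'g set \<Rightarrow> real) \<Rightarrow> (nat \<Rightarrow> real) \<Rightarrow> nat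
    \<Rightarrow> 'g config \<Rightarrow> 'g config \<Rightarrow> real \<Rightarrow> bool"
  for M v b n where
  step_fail: "\<lbrakk> sorted_order n b s \<sigma>; round_exec M v s \<sigma> M (\<lambda>_. {}) (Failed i) c \<rbrakk>
    \<Longrightarrow> alg_step M v b n (Running s) (Running (s(i := s i - 1))) (sort_cost n + c)"
| step_done: "\<lbrakk> sorted_order n b s \<sigma>; round_exec M v s \<sigma> M (\<lambda>_. {}) (All_Served A R) c;
      f ` R \<subseteq> {..<n} \<rbrakk>
    \<Longrightarrow> alg_step M v b n (Running s) (Done (\<lambda>i. A i \<union> {g\<in>R. f g = i}))
          (sort_cost n + c + real (card M))"

inductive alg_exec :: "'g set \<Rightarrow> (nat \<Rightarrow> 'g set \<Rightarrow> real) \<Rightarrow> (nat \<Rightarrow> real) \<Rightarrow> nat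
    \<Rightarrow> 'g config \<Rightarrow> real \<Rightarrow> bool"
  for M v b n where
  exec_init: "alg_exec M v b n (Running (\<lambda>i. \<lfloor>b i * real (card M)\<rfloor>)) 0"
| exec_step: "\<lbrakk> alg_exec M v b n cfg c; alg_step M v b n cfg cfg' d \<rbrakk>
    \<Longrightarrow> alg_exec M v b n cfg' (c + d)"

end

theory Submission
  imports Defs
begin

text \<open>The quantity \<open>\<Sum>\<^sub>i s\<^sub>i\<close> is a potential: it starts at most \<open>m\<close>, every failed repetition
  lowers it by one, and it never becomes negative, because an agent can only fail when
  \<open>\<lceil>s\<^sub>i/2\<rceil> > v\<^sub>i(R) \<ge> 0\<close>, i.e. when \<open>s\<^sub>i \<ge> 1\<close>. Hence there are at most \<open>m + 1\<close> repetitions,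
  each costing \<open>O(n log n + nm)\<close>. The algorithm never gets stuck: by the XOS structure,
  a set of value \<open>k\<close> contains a non-wasteful subset of size \<open>k\<close>.\<close>

lemma binary_marginals_bounds:
  assumes "binary_marginals M v" and "finite T" and "T \<subseteq> M"
  shows "0 \<le> v T \<and> v T \<le> real (card T)"
  using assms(2,3)
proof (induction T rule: finite_induct)
  case empty
  then show ?case using assms(1) by (simp add: binary_marginals_def)
next
  case (insert x F)
  have "v (insert x F) - v F \<in> {0, 1}"
    using assms(1) insert.prems by (simp add: binary_marginals_def)
  then show ?case using insert by auto
qed

lemma binary_marginals_remove:
  assumes "binary_marginals M v" and "T \<subseteq> M" and "g \<in> T"
  shows "v T - v (T - {g}) \<in> {0, 1}"
proof -
  have "v (insert g (T - {g})) - v (T - {g}) \<in> {0, 1}"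
    using assms unfolding binary_marginals_def by blast
  moreover have "insert g (T - {g}) = T" using assms(3) by auto
  ultimately show ?thesis by simp
qed

lemma binary_XOS_wasteful_has_redundant:
  assumes bx: "binary_XOS M v" and fin: "finite T" and sub: "T \<subseteq> M"
    and wasteful: "v T < real (card T)"
  shows "\<exists>g\<in>T. v T \<le> v (T - {g})"
proof (rule ccontr)
  assume no_redundant: "\<not> ?thesis"
  have bm: "binary_marginals M v" using bx by (simp add: binary_XOS_def)
  obtain L :: "('a \<Rightarrow> real) set" where L: "finite L" "L \<noteq> {}"
    "\<And>S. S \<subseteq> M \<Longrightarrow> v S = Max ((\<lambda>l. \<Sum>g\<in>S. l g) ` L)"
    using bx unfolding binary_XOS_def XOS_def by blast
  have "Max ((\<lambda>l. \<Sum>g\<in>T. l g) ` L) \<in> (\<lambda>l. \<Sum>g\<in>T. l g) ` L"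
    using L(1,2) by (intro Max_in) auto
  then obtain l where l: "l \<in> L" "v T = (\<Sum>g\<in>T. l g)"
    using L(3)[OF sub] by auto
  \<comment> \<open>removing \<open>g\<close> lowers \<open>v\<close> by 1 but the \<open>l\<close>-sum, still a lower bound, only by \<open>l g\<close>\<close>
  have "1 \<le> l g" if g: "g \<in> T" for g
  proof -
    have "v T - v (T - {g}) \<in> {0, 1}"
      using binary_marginals_remove[OF bm sub g] .
    then have "v (T - {g}) = v T - 1"
      using no_redundant g by auto
    moreover have "(\<Sum>h\<in>T - {g}. l h) \<le> v (T - {g})"
      using L(1,3) l(1) sub by (simp add: Max_ge subset_trans[OF Diff_subset])
    moreover have "(\<Sum>h\<in>T - {g}. l h) = v T - l g"
      using fin g l(2) by (simp add: sum_diff1)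
    ultimately show ?thesis by linarith
  qed
  then have "real (card T) \<le> v T"
    using l(2) sum_mono[of T "\<lambda>_. 1::real" l] by simp
  with wasteful show False by simp
qed

lemma binary_XOS_remove_keeping_value:
  assumes bx: "binary_XOS M v" and "finite T" and sub: "T \<subseteq> M"
    and "real k \<le> v T" and "k < card T"
  shows "\<exists>g\<in>T. real k \<le> v (T - {g})"
proof (cases "v T < real (card T)")
  case True
  then show ?thesis
    using binary_XOS_wasteful_has_redundant[OF assms(1-3)] assms(4) by force
next
  case False
  obtain g where g: "g \<in> T" using \<open>k < card T\<close> by fastforce
  have bm: "binary_marginals M v" using bx by (simp add: binary_XOS_def)
  have "v T - 1 \<le> v (T - {g})" using binary_marginals_remove[OF bm sub g] by auto
  then show ?thesis using g False \<open>k < card T\<close> by (intro bexI[of _ g]) auto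
qed

lemma binary_XOS_nonwasteful_subset:
  assumes bx: "binary_XOS M v" and "finite T" and "T \<subseteq> M" and "real k \<le> v T"
  shows "\<exists>X\<subseteq>T. card X = k \<and> v X = real k"
  using assms(2-4)
proof (induction "card T" arbitrary: T)
  case 0
  then show ?case using bx by (simp add: binary_XOS_def binary_marginals_def)
next
  case (Suc x)
  have "v T \<le> real (card T)"
    using binary_marginals_bounds Suc.prems(1,2) bx by (auto simp: binary_XOS_def)
  show ?case
  proof (cases "k = card T")
    case True
    then show ?thesis using \<open>v T \<le> real (card T)\<close> Suc.prems(3) by auto
  next
    case False
    then have "k < card T" using \<open>v T \<le> real (card T)\<close> Suc.prems(3) by linarith
    then obtain g where g: "g \<in> T" "real k \<le> v (T - {g})"
      using binary_XOS_remove_keeping_value[OF bx Suc.prems] by blast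
    have "x = card (T - {g})" using Suc.hyps(2) g(1) Suc.prems(1) by simp
    then obtain X where "X \<subseteq> T - {g}" "card X = k" "v X = real k"
      using Suc.hyps(1) Suc.prems(1,2) g by blast
    then show ?thesis by blast
  qed
qed

lemma half_nonneg: "0 \<le> k \<Longrightarrow> 0 \<le> half k"
  unfolding half_def by simp

lemma half_pos_imp_pos: "0 < half k \<Longrightarrow> 1 \<le> k"
  unfolding half_def by (simp add: zero_less_ceiling)

lemma round_exec_cost_le:
  "round_exec M v s \<sigma> R A out c \<Longrightarrow> c \<le> real (length \<sigma>) * (1 + 2 * real (card M))"
  by (induction rule: round_exec.induct) (auto simp: algebra_simps)

lemma round_exec_Failed:
  assumes "round_exec M v s \<sigma> R A (Failed i) c"
  shows "i \<in> set \<sigma> \<and> (\<exists>R'\<subseteq>R. v i R' < real_of_int (half (s i)))"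
  using assms
  by (induction \<sigma> R A "Failed i :: 'a round_outcome" c rule: round_exec.induct) auto

lemma round_exec_exists:
  assumes bx: "\<forall>i<n. binary_XOS M (v i)" and fin: "finite M"
    and s_nonneg: "\<forall>i<n. 0 \<le> s i"
  shows "set \<sigma> \<subseteq> {..<n} \<Longrightarrow> R \<subseteq> M \<Longrightarrow> \<exists>out c. round_exec M v s \<sigma> R A out c"
proof (induction \<sigma> arbitrary: R A)
  case Nil
  then show ?case by (blast intro: round_nil)
next
  case (Cons i \<sigma>)
  have i: "i < n" using Cons.prems by auto
  show ?case
  proof (cases "real_of_int (half (s i)) \<le> v i R")
    case True
    have half_eq: "half (s i) = int (nat (half (s i)))"
      using half_nonneg s_nonneg i by simp
    obtain X where X: "X \<subseteq> R" "card X = nat (half (s i))" "v i X = real (card X)"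
      using binary_XOS_nonwasteful_subset[OF bx[rule_format, OF i], of R "nat (half (s i))"]
        True Cons.prems(2) fin half_eq by (metis finite_subset of_int_of_nat_eq)
    obtain out c where "round_exec M v s \<sigma> (R - X) (A(i := X)) out c"
      using Cons.IH Cons.prems by (meson Diff_subset set_subset_Cons subset_trans)
    then show ?thesis using True X half_eq by (metis round_serve)
  next
    case False
    then show ?thesis by (blast intro: round_fail)
  qed
qed

lemma sorted_order_exists: "\<exists>\<sigma>. sorted_order n b s \<sigma>"
proof -
  let ?key = "\<lambda>i. real_of_int (half (s i)) / b i"
  have "sorted_wrt (\<lambda>i j. ?key i \<le> ?key j) (sort_key ?key [0..<n])"
    using sorted_sort_key[of ?key "[0..<n]"] by (simp add: sorted_map)
  then show ?thesis unfolding sorted_order_def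
    by (intro exI[of _ "sort_key ?key [0..<n]"]) (simp add: distinct_sort atLeast0LessThan)
qed

lemma sorted_order_length: "sorted_order n b s \<sigma> \<Longrightarrow> length \<sigma> = n"
  unfolding sorted_order_def by (metis card_lessThan distinct_card)

definition step_cost_bound :: "nat \<Rightarrow> nat \<Rightarrow> real" where
  "step_cost_bound n m = sort_cost n + real n * (1 + 2 * real m) + real m"

lemma step_cost_bound_nonneg: "1 \<le> n \<Longrightarrow> 0 \<le> step_cost_bound n m"
  unfolding step_cost_bound_def sort_cost_def by simp

lemma alg_step_cost_le:
  assumes "alg_step M v b n cfg cfg' d"
  shows "d \<le> step_cost_bound n (card M)"
  using assms
proof cases
  case (step_fail s \<sigma> i c)
  then have "c \<le> real n * (1 + 2 * real (card M))"
    using round_exec_cost_le sorted_order_length by metis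
  then show ?thesis using step_fail(3) by (simp add: step_cost_bound_def)
next
  case (step_done s \<sigma> A R c f)
  then have "c \<le> real n * (1 + 2 * real (card M))"
    using round_exec_cost_le sorted_order_length by metis
  then show ?thesis using step_done(3) by (simp add: step_cost_bound_def)
qed

lemma alg_step_exists:
  assumes "finite M" and "1 \<le> n" and "\<forall>i<n. binary_XOS M (v i)" and "\<forall>i<n. 0 \<le> s i"
  shows "\<exists>cfg' d. alg_step M v b n (Running s) cfg' d"
proof -
  obtain \<sigma> where \<sigma>: "sorted_order n b s \<sigma>" using sorted_order_exists by blast
  then have "set \<sigma> \<subseteq> {..<n}" unfolding sorted_order_def by simp
  then obtain out c where round: "round_exec M v s \<sigma> M (\<lambda>_. {}) out c"
    using round_exec_exists assms(1,3,4) by blast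
  show ?thesis
  proof (cases out)
    case (All_Served A R)
    have "(\<lambda>_. 0) ` R \<subseteq> {..<n}" using \<open>1 \<le> n\<close> by auto
    then show ?thesis using \<sigma> round All_Served by (blast intro: step_done)
  next
    case (Failed i)
    then show ?thesis using \<sigma> round by (blast intro: step_fail)
  qed
qed

lemma round_exec_Failed_share_pos:
  assumes "sorted_order n b s \<sigma>" and "round_exec M v s \<sigma> M A (Failed i) c"
    and "finite M" and "\<forall>i<n. binary_XOS M (v i)"
  shows "i < n \<and> 1 \<le> s i"
proof -
  obtain R' where i: "i < n" and R': "R' \<subseteq> M" "v i R' < real_of_int (half (s i))"
    using round_exec_Failed[OF assms(2)] assms(1) unfolding sorted_order_def by blast
  have "0 \<le> v i R'"
    using binary_marginals_bounds[of M "v i" R'] assms(3,4) i R'(1)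
    by (auto simp: binary_XOS_def intro: finite_subset)
  then show ?thesis using i R'(2) half_pos_imp_pos by fastforce
qed

definition shares_nonneg :: "nat \<Rightarrow> 'g config \<Rightarrow> bool" where
  "shares_nonneg n cfg = (case cfg of Running s \<Rightarrow> \<forall>i<n. 0 \<le> s i | Done A \<Rightarrow> True)"

text \<open>\<open>Done\<close> gets potential \<open>-1\<close>, so that the final step lowers the potential too.\<close>

definition config_potential :: "nat \<Rightarrow> 'g config \<Rightarrow> real" where
  "config_potential n cfg =
    (case cfg of Running s \<Rightarrow> (\<Sum>i<n. real_of_int (s i)) | Done A \<Rightarrow> -1)"

lemma config_potential_Running_nonneg:
  "shares_nonneg n (Running s) \<Longrightarrow> 0 \<le> config_potential n (Running s)"
  unfolding shares_nonneg_def config_potential_def by (simp, intro sum_nonneg) simp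

lemma config_potential_ge:
  assumes "shares_nonneg n cfg"
  shows "-1 \<le> config_potential n cfg"
proof (cases cfg)
  case (Running s)
  then have "0 \<le> config_potential n cfg"
    using config_potential_Running_nonneg assms by simp
  then show ?thesis by linarith
next
  case (Done A)
  then show ?thesis by (simp add: config_potential_def)
qed

lemma sum_fun_upd:
  fixes f :: "'a \<Rightarrow> 'b::ab_group_add"
  assumes "finite A" and "a \<in> A"
  shows "sum (f(a := x)) A = sum f A - f a + x"
proof -
  have "sum (f(a := x)) A = x + sum (f(a := x)) (A - {a})"
    using assms by (simp add: sum.remove)
  also have "sum (f(a := x)) (A - {a}) = sum f (A - {a})"
    by (intro sum.cong) auto
  also have "sum f (A - {a}) = sum f A - f a"
    using assms by (simp add: sum.remove)
  finally show ?thesis by (simp add: algebra_simps)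
qed

lemma alg_step_decreases_potential:
  assumes step: "alg_step M v b n cfg cfg' d"
    and fin: "finite M" and bx: "\<forall>i<n. binary_XOS M (v i)" and nonneg: "shares_nonneg n cfg"
  shows "shares_nonneg n cfg' \<and> config_potential n cfg' \<le> config_potential n cfg - 1"
  using step
proof cases
  case (step_fail s \<sigma> i c)
  have i: "i < n \<and> 1 \<le> s i"
    using round_exec_Failed_share_pos[OF step_fail(4,5) fin bx] .
  then have "(\<Sum>j<n. (s(i := s i - 1)) j) = (\<Sum>j<n. s j) - 1"
    using sum_fun_upd[of "{..<n}" i s "s i - 1"] by simp
  then have "(\<Sum>j<n. real_of_int ((s(i := s i - 1)) j)) = (\<Sum>j<n. real_of_int (s j)) - 1"
    unfolding of_int_sum[symmetric] by simp
  moreover have "\<forall>j<n. 0 \<le> (s(i := s i - 1)) j"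
    using nonneg i step_fail(1) by (simp add: shares_nonneg_def)
  ultimately show ?thesis
    using step_fail(1,2) by (simp add: shares_nonneg_def config_potential_def)
next
  case (step_done s)
  then have "-1 \<le> config_potential n cfg - 1"
    using config_potential_Running_nonneg[of n s] nonneg by simp
  then show ?thesis using step_done(2) by (simp add: shares_nonneg_def config_potential_def)
qed

lemma initial_shares_sum_le:
  assumes "(\<Sum>i<n. b i) = 1"
  shows "(\<Sum>i<n. real_of_int \<lfloor>b i * real m\<rfloor>) \<le> real m"
proof -
  have "(\<Sum>i<n. real_of_int \<lfloor>b i * real m\<rfloor>) \<le> (\<Sum>i<n. b i * real m)"
    by (intro sum_mono) simp
  also have "\<dots> = real m" using assms by (simp add: sum_distrib_right[symmetric])
  finally show ?thesis .
qed

lemma alg_exec_cost_le_potential: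
  assumes ex: "alg_exec M v b n cfg c"
    and fin: "finite M" and n1: "1 \<le> n" and bx: "\<forall>i<n. binary_XOS M (v i)"
    and bpos: "\<forall>i<n. b i > 0" and bsum: "(\<Sum>i<n. b i) = 1"
  shows "shares_nonneg n cfg \<and>
    c \<le> step_cost_bound n (card M) * (real (card M) - config_potential n cfg)"
  using ex
proof (induction rule: alg_exec.induct)
  case exec_init
  then show ?case
    using initial_shares_sum_le[OF bsum] step_cost_bound_nonneg[OF n1] bpos
    by (simp add: shares_nonneg_def config_potential_def less_imp_le)
next
  case (exec_step cfg c cfg' d)
  let ?K = "step_cost_bound n (card M)"
  have d: "d \<le> ?K" using alg_step_cost_le[OF exec_step.hyps(2)] .
  have decrease: "shares_nonneg n cfg'" "config_potential n cfg' \<le> config_potential n cfg - 1"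
    using alg_step_decreases_potential[OF exec_step.hyps(2) fin bx] exec_step.IH by auto
  have "c + d \<le> ?K * (real (card M) - config_potential n cfg) + ?K"
    using exec_step.IH d by linarith
  also have "\<dots> = ?K * (real (card M) - (config_potential n cfg - 1))"
    by (simp add: algebra_simps)
  also have "\<dots> \<le> ?K * (real (card M) - config_potential n cfg')"
    using decrease(2) step_cost_bound_nonneg[OF n1] by (intro mult_left_mono) auto
  finally show ?case using decrease(1) by blast
qed

lemma step_cost_bound_total:
  assumes "1 \<le> m" and "1 \<le> n"
  shows "step_cost_bound n m * (real m + 1) \<le> 10 * real m * real n * (real m + ln (real n))"
proof -
  have ln_nonneg: "0 \<le> ln (real n)" using assms(2) by simp
  have "real n \<le> real n * real m" and "real m \<le> real n * real m" using assms by simp_all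
  then have "step_cost_bound n m \<le> real n * ln (real n) + 5 * real n * real m"
    unfolding step_cost_bound_def sort_cost_def by (simp add: algebra_simps)
  moreover have "real m + 1 \<le> 2 * real m" using assms(1) by simp
  ultimately have "step_cost_bound n m * (real m + 1)
      \<le> (real n * ln (real n) + 5 * real n * real m) * (2 * real m)"
    using ln_nonneg step_cost_bound_nonneg[OF assms(2)] by (intro mult_mono) auto
  also have "\<dots> \<le> 10 * real m * real n * (real m + ln (real n))"
    using ln_nonneg by (simp add: algebra_simps)
  finally show ?thesis .
qed

theorem lemma2:
  shows "\<exists>C::real. \<forall>(M::'g set) (n::nat) (v::nat \<Rightarrow> 'g set \<Rightarrow> real) (b::nat \<Rightarrow> real).
    finite M \<and> card M \<ge> 1 \<and> n \<ge> 1 \<and> (\<forall>i<n. binary_XOS M (v i)) \<and>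
    (\<forall>i<n. b i > 0) \<and> (\<Sum>i<n. b i) = 1 \<longrightarrow>
    (\<forall>cfg c. alg_exec M v b n cfg c \<longrightarrow>
       c \<le> C * real (card M) * real n * (real (card M) + ln (real n)) \<and>
       ((\<exists>A. cfg = Done A) \<or> (\<exists>cfg' d. alg_step M v b n cfg cfg' d)))"
proof (intro exI[of _ 10] allI impI conjI)
  fix M :: "'g set" and n v b cfg c
  assume "finite M \<and> card M \<ge> 1 \<and> n \<ge> 1 \<and> (\<forall>i<n. binary_XOS M (v i)) \<and>
    (\<forall>i<n. b i > 0) \<and> (\<Sum>i<n. b i) = 1" and ex: "alg_exec M v b n cfg c"
  then have fin: "finite M" and m1: "1 \<le> card M" and n1: "1 \<le> n"
    and bx: "\<forall>i<n. binary_XOS M (v i)" and "\<forall>i<n. b i > 0" and "(\<Sum>i<n. b i) = 1"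
    by auto
  then have nonneg: "shares_nonneg n cfg"
    and cost: "c \<le> step_cost_bound n (card M) * (real (card M) - config_potential n cfg)"
    using alg_exec_cost_le_potential[OF ex fin n1 bx] by auto
  have "step_cost_bound n (card M) * (real (card M) - config_potential n cfg)
      \<le> step_cost_bound n (card M) * (real (card M) + 1)"
    using config_potential_ge[OF nonneg] step_cost_bound_nonneg[OF n1]
    by (intro mult_left_mono) auto
  then show "c \<le> 10 * real (card M) * real n * (real (card M) + ln (real n))"
    using cost step_cost_bound_total[OF m1 n1] by linarith
  show "(\<exists>A. cfg = Done A) \<or> (\<exists>cfg' d. alg_step M v b n cfg cfg' d)"
    using nonneg alg_step_exists[OF fin n1 bx] by (cases cfg) (auto simp: shares_nonneg_def)
qed

end
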